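(* Let $A,B$ be invertible positive bounded linear operators on a complex Hilbert space with $0<A\leq B$. Then $$3(A-B)+BA^{-1}B-AB^{-1}A\geq 0.$$
   Context: An operator $X$ is positive ($X\ge0$) if it is self-adjoint and $\langle x, Xx\rangle\ge0$ for all vectors $x$; $X\le Y$ means $Y-X\ge0$, and $0<A$ means $A$ is positive and invertible. *)

theory Defs
  imports "HOL-Analysis.Analysis" "HOL-Library.Complex_Order"
begin

text \<open>Complex Hilbert spaces: a Banach space (over the reals, as in the library)
  carrying a compatible complex scalar multiplication and a complex inner product
  (conjugate-linear in the first argument, linear in the second) inducing the norm.\<close>

class complex_hilbert = banach +
  fixes scaleC :: "complex \<Rightarrow> 'a \<Rightarrow> 'a" (infixr "*\<^sub>C" 75)
    and cinner :: "'a \<Rightarrow> 'a \<Rightarrow> complex"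
  assumes scaleC_add_right: "scaleC a (x + y) = scaleC a x + scaleC a y"
    and scaleC_add_left: "scaleC (a + b) x = scaleC a x + scaleC b x"
    and scaleC_scaleC: "scaleC a (scaleC b x) = scaleC (a * b) x"
    and scaleC_one: "scaleC 1 x = x"
    and scaleR_scaleC: "scaleR r x = scaleC (complex_of_real r) x"
    and cinner_add_right: "cinner x (y + z) = cinner x y + cinner x z"
    and cinner_scaleC_right: "cinner x (scaleC a y) = a * cinner x y"
    and cinner_commute: "cinner y x = cnj (cinner x y)"
    and norm_cinner: "norm x = sqrt (Re (cinner x x))"

instantiation complex :: complex_hilbert
begin
definition scaleC_complex :: "complex \<Rightarrow> complex \<Rightarrow> complex" where "scaleC_complex a x = a * x"
definition cinner_complex :: "complex \<Rightarrow> complex \<Rightarrow> complex" where "cinner_complex x y = cnj x * y"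
instance
  by standard (auto simp: scaleC_complex_def cinner_complex_def algebra_simps scaleR_conv_of_real
      complex_norm_square[symmetric] cmod_def)
end

definition bounded_clinear :: "('a::complex_hilbert \<Rightarrow> 'a) \<Rightarrow> bool" where
  "bounded_clinear f \<longleftrightarrow> bounded_linear f \<and> (\<forall>c x. f (c *\<^sub>C x) = c *\<^sub>C f x)"

definition positive_op :: "('a::complex_hilbert \<Rightarrow> 'a) \<Rightarrow> bool" where
  "positive_op X \<longleftrightarrow> bounded_clinear X \<and> (\<forall>x y. cinner x (X y) = cinner (X x) y)
      \<and> (\<forall>x. 0 \<le> cinner x (X x))"

definition op_le :: "('a::complex_hilbert \<Rightarrow> 'a) \<Rightarrow> ('a \<Rightarrow> 'a) \<Rightarrow> bool" where
  "op_le X Y \<longleftrightarrow> positive_op (\<lambda>x. Y x - X x)"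

definition invertible_op :: "('a::complex_hilbert \<Rightarrow> 'a) \<Rightarrow> bool" where
  "invertible_op X \<longleftrightarrow> bounded_clinear X \<and>
     (\<exists>Y. bounded_clinear Y \<and> (\<forall>x. X (Y x) = x) \<and> (\<forall>x. Y (X x) = x))"

end

theory Submission
  imports Defs
begin

(* Put D = B - A.  Expanding B = A + D and A = B - D one finds the identity
     3(A - B) + B A^-1 B - A B^-1 A = D (A^-1 - B^-1) D,
   so the operator in question is a congruence D P D of P = A^-1 - B^-1 by the
   self-adjoint operator D.  Inversion is antitone on positive invertible operators,
   hence A <= B gives P >= 0, and a congruence of a positive operator by a bounded
   self-adjoint operator is again positive. *)

lemma cinner_minus_right: "cinner x (- (y::'a::complex_hilbert)) = - cinner x y"
proof -
  have "cinner x y + cinner x (- y) = cinner x (y + - y)" by (rule cinner_add_right[symmetric])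
  also have "\<dots> = cinner x 0" by simp
  also have "\<dots> = 0" using cinner_add_right[of x 0 0] by simp
  finally show ?thesis by (rule minus_unique[symmetric])
qed

lemma cinner_diff_right: "cinner x (y - (z::'a::complex_hilbert)) = cinner x y - cinner x z"
  by (simp only: diff_conv_add_uminus cinner_add_right cinner_minus_right)

lemma cinner_diff_left: "cinner (x - y) (z::'a::complex_hilbert) = cinner x z - cinner y z"
  by (metis cinner_commute cinner_diff_right complex_cnj_diff)

lemma scaleC_diff_right: "c *\<^sub>C (x - y) = c *\<^sub>C x - c *\<^sub>C (y::'a::complex_hilbert)"
  by (metis add_diff_cancel diff_add_cancel scaleC_add_right)

lemma scaleC_three: "3 *\<^sub>C v = v + v + (v::'a::complex_hilbert)"
  using scaleC_add_left[of "1 + 1" 1 v] scaleC_add_left[of 1 1 v] by (simp add: scaleC_one)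

definition selfadjoint_op :: "('a::complex_hilbert \<Rightarrow> 'a) \<Rightarrow> bool" where
  "selfadjoint_op X \<longleftrightarrow> (\<forall>x y. cinner x (X y) = cinner (X x) y)"

lemma positive_op_iff:
  "positive_op X \<longleftrightarrow> bounded_clinear X \<and> selfadjoint_op X \<and> (\<forall>x. 0 \<le> cinner x (X x))"
  unfolding positive_op_def selfadjoint_op_def by blast

lemma positive_opI:
  assumes "bounded_clinear X" "selfadjoint_op X" "\<And>x. 0 \<le> cinner x (X x)"
  shows "positive_op X"
  using assms unfolding positive_op_iff by blast

lemma bounded_clinear_diff:
  assumes "bounded_clinear f" "bounded_clinear g"
  shows "bounded_clinear (\<lambda>x. f x - g x)"
  using assms unfolding bounded_clinear_def by (auto intro: bounded_linear_sub simp: scaleC_diff_right)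

lemma bounded_clinear_compose:
  assumes "bounded_clinear f" "bounded_clinear g"
  shows "bounded_clinear (\<lambda>x. f (g x))"
  using assms unfolding bounded_clinear_def by (auto intro: bounded_linear_compose)

lemma selfadjoint_diff:
  assumes "selfadjoint_op X" "selfadjoint_op Y"
  shows "selfadjoint_op (\<lambda>x. X x - Y x)"
  using assms unfolding selfadjoint_op_def by (simp add: cinner_diff_left cinner_diff_right)

lemma selfadjoint_right_inverse:
  assumes sa: "selfadjoint_op X" and XY: "\<And>x. X (Y x) = x"
  shows "selfadjoint_op Y"
  unfolding selfadjoint_op_def
proof (intro allI)
  fix x y
  have "cinner x (Y y) = cinner (X (Y x)) (Y y)" by (simp only: XY)
  also have "\<dots> = cinner (Y x) (X (Y y))" using sa unfolding selfadjoint_op_def by simp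
  also have "\<dots> = cinner (Y x) y" by (simp only: XY)
  finally show "cinner x (Y y) = cinner (Y x) y" .
qed

lemma invertible_op_inv:
  assumes "invertible_op A"
  shows "bounded_clinear (inv A)" "\<And>x. A (inv A x) = x" "\<And>x. inv A (A x) = x"
proof -
  from assms obtain Y where Y: "bounded_clinear Y" "\<forall>x. A (Y x) = x" "\<forall>x. Y (A x) = x"
    unfolding invertible_op_def by blast
  have "inv A = Y"
    by (rule ext) (metis Y(2,3) inv_f_f injI)
  with Y show "bounded_clinear (inv A)" "\<And>x. A (inv A x) = x" "\<And>x. inv A (A x) = x"
    by auto
qed

text \<open>Congruence: if \<open>P \<ge> 0\<close> and \<open>D\<close> is bounded and self-adjoint, then \<open>D P D \<ge> 0\<close>,
  because \<open>\<langle>x, D P D x\<rangle> = \<langle>D x, P (D x)\<rangle>\<close>.\<close>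

lemma positive_congruence:
  assumes P: "positive_op P" and D: "bounded_clinear D" "selfadjoint_op D"
  shows "positive_op (\<lambda>x. D (P (D x)))"
proof -
  have saP: "\<And>x y. cinner x (P y) = cinner (P x) y"
    and posP: "\<And>x. 0 \<le> cinner x (P x)" and bP: "bounded_clinear P"
    using P unfolding positive_op_iff selfadjoint_op_def by blast+
  have saD: "\<And>x y. cinner x (D y) = cinner (D x) y"
    using D(2) unfolding selfadjoint_op_def by blast
  have "bounded_clinear (\<lambda>x. D (P (D x)))"
    by (rule bounded_clinear_compose[OF D(1) bounded_clinear_compose[OF bP D(1)]])
  moreover have "selfadjoint_op (\<lambda>x. D (P (D x)))"
    unfolding selfadjoint_op_def
  proof (intro allI)
    fix x y
    have "cinner x (D (P (D y))) = cinner (D x) (P (D y))" by (rule saD)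
    also have "\<dots> = cinner (P (D x)) (D y)" by (rule saP)
    also have "\<dots> = cinner (D (P (D x))) y" by (rule saD)
    finally show "cinner x (D (P (D y))) = cinner (D (P (D x))) y" .
  qed
  moreover have "0 \<le> cinner x (D (P (D x)))" for x
    unfolding saD by (rule posP)
  ultimately show ?thesis by (rule positive_opI)
qed

text \<open>Nonnegative complex numbers are real, so they equal their conjugate.\<close>

lemma nonneg_complex_cnj: "0 \<le> (z::complex) \<Longrightarrow> cnj z = z"
  by (simp add: less_eq_complex_def complex_eq_iff)

text \<open>With \<open>w = A\<^sup>-\<^sup>1 y\<close> and
  \<open>z = B\<^sup>-\<^sup>1 y\<close> one has
  \<open>\<langle>y, A\<^sup>-\<^sup>1 y\<rangle> - \<langle>y, B\<^sup>-\<^sup>1 y\<rangle> = \<langle>w - z, A (w - z)\<rangle> + \<langle>z, (B - A) z\<rangle> \<ge> 0\<close>.\<close>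

lemma inverse_form_antitone:
  fixes A B Ai Bi :: "'a::complex_hilbert \<Rightarrow> 'a"
  assumes pA: "positive_op A" and pB: "positive_op B" and le: "op_le A B"
    and Ai: "\<And>x. A (Ai x) = x" and Bi: "\<And>x. B (Bi x) = x"
  shows "cinner y (Bi y) \<le> cinner y (Ai y)"
proof -
  define w where "w = Ai y"
  define z where "z = Bi y"
  have linA: "linear A"
    using pA unfolding positive_op_def bounded_clinear_def by (simp add: bounded_linear.linear)
  have saA: "\<And>x y. cinner x (A y) = cinner (A x) y"
    and saB: "\<And>x y. cinner x (B y) = cinner (B x) y"
    and posA: "\<And>x. 0 \<le> cinner x (A x)" and posB: "\<And>x. 0 \<le> cinner x (B x)"
    using pA pB unfolding positive_op_def by blast+
  have posD: "\<And>x. 0 \<le> cinner x (B x - A x)"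
    using le unfolding op_le_def positive_op_def by blast
  have Aw: "A w = y" and Bz: "B z = y" using Ai Bi by (simp_all add: w_def z_def)
  have yw: "cinner y w = cinner w (A w)" using saA Aw by metis
  have yz: "cinner y z = cinner z (B z)" using saB Bz by metis
  have wy: "cinner w y = cinner y w"
    by (metis Aw cinner_commute posA nonneg_complex_cnj yw)
  have zy: "cinner z y = cinner y z"
    by (metis Bz cinner_commute posB nonneg_complex_cnj yz)
  have wAz: "cinner w (A z) = cinner y z" using saA Aw by metis
  have "A (w - z) = y - A z" using Aw linear_diff[OF linA] by metis
  then have quadA: "cinner (w - z) (A (w - z)) = cinner y w - 2 * cinner y z + cinner z (A z)"
    by (simp add: cinner_diff_left cinner_diff_right wy zy wAz)
  have quadD: "cinner z (B z - A z) = cinner y z - cinner z (A z)"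
    by (simp add: cinner_diff_right Bz zy)
  have "0 \<le> cinner (w - z) (A (w - z)) + cinner z (B z - A z)"
    using posA posD by (simp add: add_nonneg_nonneg)
  also have "\<dots> = cinner y w - cinner y z" using quadA quadD by simp
  finally show ?thesis unfolding w_def z_def by (simp add: less_eq_complex_def)
qed

lemma inverse_antitone:
  assumes pA: "positive_op A" "invertible_op A" and pB: "positive_op B" "invertible_op B"
    and le: "op_le A B"
  shows "op_le (inv B) (inv A)"
proof -
  have "bounded_clinear (\<lambda>x. inv A x - inv B x)"
    by (intro bounded_clinear_diff invertible_op_inv(1) pA(2) pB(2))
  moreover have "selfadjoint_op (\<lambda>x. inv A x - inv B x)"
  proof (rule selfadjoint_diff)
    have "selfadjoint_op A" using pA(1) by (simp add: positive_op_iff)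
    then show "selfadjoint_op (inv A)"
      by (rule selfadjoint_right_inverse) (rule invertible_op_inv(2)[OF pA(2)])
    have "selfadjoint_op B" using pB(1) by (simp add: positive_op_iff)
    then show "selfadjoint_op (inv B)"
      by (rule selfadjoint_right_inverse) (rule invertible_op_inv(2)[OF pB(2)])
  qed
  moreover have "0 \<le> cinner x (inv A x - inv B x)" for x
    using inverse_form_antitone[OF pA(1) pB(1) le invertible_op_inv(2)[OF pA(2)]
        invertible_op_inv(2)[OF pB(2)], of x]
    by (simp add: cinner_diff_right less_eq_complex_def)
  ultimately show ?thesis unfolding op_le_def by (rule positive_opI)
qed

lemma congruence_identity:
  fixes A B Ai Bi :: "'a::complex_hilbert \<Rightarrow> 'a"
  assumes lin: "linear A" "linear B"
    and Ai: "\<And>x. A (Ai x) = x" "\<And>x. Ai (A x) = x"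
    and Bi: "\<And>x. B (Bi x) = x" "\<And>x. Bi (B x) = x"
  defines "D \<equiv> \<lambda>x. B x - A x"
  shows "3 *\<^sub>C (A x - B x) + B (Ai (B x)) - A (Bi (A x)) = D (Ai (D x) - Bi (D x))"
proof -
  have "B x = A (x + Ai (D x))"
    using lin(1) by (simp add: linear_add Ai(1) D_def)
  then have AiB: "Ai (B x) = x + Ai (D x)" by (simp add: Ai(2))
  have "A x = B (x - Bi (D x))"
    using lin(2) by (simp add: linear_diff Bi(1) D_def)
  then have BiA: "Bi (A x) = x - Bi (D x)" by (simp add: Bi(2))
  have BAB: "B (Ai (B x)) = B x + D (Ai (D x)) + D x"
    using lin(2) by (simp add: AiB linear_add D_def Ai(1))
  have ABA: "A (Bi (A x)) = A x - D x + D (Bi (D x))"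
    using lin(1) by (simp add: BiA linear_diff D_def Bi(1))
  have "D (Ai (D x) - Bi (D x)) = D (Ai (D x)) - D (Bi (D x))"
    unfolding D_def using lin by (simp add: linear_diff)
  then show ?thesis unfolding BAB ABA scaleC_three by (simp add: D_def algebra_simps)
qed

theorem mainTheorem9:
  fixes A B :: "'a::complex_hilbert \<Rightarrow> 'a"
  assumes "positive_op A" and "invertible_op A"
    and "positive_op B" and "invertible_op B"
    and "op_le A B"
  shows "positive_op (\<lambda>x. 3 *\<^sub>C (A x - B x) + B (inv A (B x)) - A (inv B (A x)))"
proof -
  define D where "D x = B x - A x" for x
  define P where "P x = inv A x - inv B x" for x
  have lin: "linear A" "linear B"
    using assms(1,3) unfolding positive_op_def bounded_clinear_def
    by (simp_all add: bounded_linear.linear)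
  have identity: "(\<lambda>x. 3 *\<^sub>C (A x - B x) + B (inv A (B x)) - A (inv B (A x)))
      = (\<lambda>x. D (P (D x)))"
    unfolding D_def P_def
    by (rule ext, rule congruence_identity[OF lin invertible_op_inv(2,3)[OF assms(2)]
          invertible_op_inv(2,3)[OF assms(4)]])
  have "positive_op P"
    using inverse_antitone[OF assms] unfolding op_le_def P_def .
  moreover have "bounded_clinear D" "selfadjoint_op D"
    using assms(1,3) unfolding positive_op_iff D_def
    by (auto intro: bounded_clinear_diff selfadjoint_diff)
  ultimately show ?thesis
    unfolding identity by (rule positive_congruence)
qed

end
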